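(* Let $p(x,y)=\sum_{i=1}^s a_i x^{\alpha_i}y^{\beta_i}\not\equiv 0$ be a real polynomial with $a_i\neq 0$, distinct exponent vectors $(\alpha_i,\beta_i)\in(\mathbb{N}\cup\{0\})^2$, and $p(0,0)=0$, and suppose there are $A=(A_1,A_2)\in\mathbb{Z}^2$ and $B\in\mathbb{Z}$ with $A_1\alpha_i+A_2\beta_i=B$ for all $i$, where one of the following holds: (a) $A_1>0$, $A_2<0$; (b) $A_1=0$, $A_2>0$; (c) $A_1>0$, $A_2=0$. In cases (a) and (b) index the terms so that $\alpha_1<\alpha_2<\dots<\alpha_s$; in case (c) index them so that $\beta_1<\beta_2<\dots<\beta_s$. Then $(0,0)$ is a point of local minimum of $p$ if and only if $a_1>0$ and $\alpha_1,\beta_1$ are even nonnegative integers.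
   Context: A point of local minimum of $p$ at $(0,0)$ means $p(x,y)\ge p(0,0)$ for all $(x,y)$ in some neighborhood of $(0,0)$. *)

theory Defs
  imports "HOL-Analysis.Analysis"
begin

definition bipoly :: "nat \<Rightarrow> (nat \<Rightarrow> real) \<Rightarrow> (nat \<Rightarrow> nat) \<Rightarrow> (nat \<Rightarrow> nat) \<Rightarrow> real \<Rightarrow> real \<Rightarrow> real" where
  "bipoly s a \<alpha> \<beta> x y = (\<Sum>i=1..s. a i * x ^ \<alpha> i * y ^ \<beta> i)"

definition local_min_at_origin :: "(real \<Rightarrow> real \<Rightarrow> real) \<Rightarrow> bool" where
  "local_min_at_origin p \<longleftrightarrow> (\<forall>\<^sub>F z in nhds ((0::real), (0::real)). p (fst z) (snd z) \<ge> p 0 0)"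

end

(* The weight condition A1 alpha_i + A2 beta_i = B, together with the chosen ordering, forces
   alpha_1 <= alpha_i and beta_1 <= beta_i with at least one inequality strict, for every i > 1.
   Hence p(x,y) = x^alpha_1 y^beta_1 (a_1 + r(x,y)) with r continuous and r(0,0) = 0, so near the
   origin p has the sign of a_1 x^alpha_1 y^beta_1; testing this monomial along the diagonal
   rays t(1,1), t(-1,1), t(1,-1), t > 0, shows it is nonnegative near (0,0) exactly when a_1 > 0 and both
   exponents are even. *)
theory Submission imports Defs begin

lemma equal_weight_exponents_le:
  fixes A1 A2 :: int and m n m' n' :: nat
  assumes weight: "A1 * int m + A2 * int n = A1 * int m' + A2 * int n'"
    and order: "((A1 > 0 \<and> A2 < 0) \<or> (A1 = 0 \<and> A2 > 0)) \<and> m < m'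
       \<or> (A1 > 0 \<and> A2 = 0) \<and> n < n'"
  shows "m \<le> m' \<and> n \<le> n'"
  using order
proof (elim disjE conjE)
  assume "A1 > 0" "A2 < 0" "m < m'"
  moreover have "A2 * (int n - int n') = A1 * (int m' - int m)"
    using weight by (simp add: algebra_simps)
  ultimately have "A2 * (int n - int n') > 0" by simp
  with \<open>A2 < 0\<close> show ?thesis using \<open>m < m'\<close> by (simp add: zero_less_mult_iff)
qed (use weight in auto)

lemma monomial_sum_tendsto_zero:
  fixes c :: "'i \<Rightarrow> real" and m n :: "'i \<Rightarrow> nat"
  assumes "\<forall>i\<in>I. 0 < m i \<or> 0 < n i"
  shows "((\<lambda>z. \<Sum>i\<in>I. c i * fst z ^ m i * snd z ^ n i) \<longlongrightarrow> 0) (nhds (0, 0))"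
proof -
  have "((\<lambda>z. \<Sum>i\<in>I. c i * fst z ^ m i * snd z ^ n i) \<longlongrightarrow>
      (\<Sum>i\<in>I. c i * fst (0::real, 0::real) ^ m i * snd (0::real, 0::real) ^ n i)) (nhds (0, 0))"
    by (intro tendsto_intros filterlim_ident)
  also have "(\<Sum>i\<in>I. c i * fst (0::real, 0::real) ^ m i * snd (0::real, 0::real) ^ n i) = 0"
    using assms by (intro sum.neutral) auto
  finally show ?thesis .
qed

lemma leading_exponents_dominate:
  fixes A1 A2 B :: int and \<alpha> \<beta> :: "nat \<Rightarrow> nat"
  assumes weights: "\<forall>i\<in>{1..s}. A1 * int (\<alpha> i) + A2 * int (\<beta> i) = B"
    and cases_order:
      "(((A1 > 0 \<and> A2 < 0) \<or> (A1 = 0 \<and> A2 > 0)) \<and> strict_mono_on {1..s} \<alpha>)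
       \<or> ((A1 > 0 \<and> A2 = 0) \<and> strict_mono_on {1..s} \<beta>)"
    and i: "i \<in> {2..s}"
  shows "\<alpha> 1 \<le> \<alpha> i \<and> \<beta> 1 \<le> \<beta> i \<and> (\<alpha> 1 < \<alpha> i \<or> \<beta> 1 < \<beta> i)"
proof -
  have in_range: "1 \<in> {1..s}" "i \<in> {1..s}" "1 < i"
    using i by auto
  have strict: "((A1 > 0 \<and> A2 < 0) \<or> (A1 = 0 \<and> A2 > 0)) \<and> \<alpha> 1 < \<alpha> i
      \<or> (A1 > 0 \<and> A2 = 0) \<and> \<beta> 1 < \<beta> i"
    using cases_order in_range by (auto simp: strict_mono_on_def)
  have "\<alpha> 1 \<le> \<alpha> i \<and> \<beta> 1 \<le> \<beta> i"
    using weights in_range by (intro equal_weight_exponents_le[OF _ strict]) simp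
  with strict show ?thesis by auto
qed

lemma bipoly_factor_leading:
  assumes "s \<ge> 1" and "\<forall>i\<in>{2..s}. \<alpha> 1 \<le> \<alpha> i \<and> \<beta> 1 \<le> \<beta> i"
  shows "bipoly s a \<alpha> \<beta> x y = x ^ \<alpha> 1 * y ^ \<beta> 1 *
    (a 1 + (\<Sum>i=2..s. a i * x ^ (\<alpha> i - \<alpha> 1) * y ^ (\<beta> i - \<beta> 1)))"
proof -
  have "{1..s} = insert 1 {2..s}"
    using assms(1) by auto
  then have "bipoly s a \<alpha> \<beta> x y
      = a 1 * x ^ \<alpha> 1 * y ^ \<beta> 1 + (\<Sum>i=2..s. a i * x ^ \<alpha> i * y ^ \<beta> i)"
    by (simp add: bipoly_def)
  also have "(\<Sum>i=2..s. a i * x ^ \<alpha> i * y ^ \<beta> i)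
      = (\<Sum>i=2..s. x ^ \<alpha> 1 * y ^ \<beta> 1 * (a i * x ^ (\<alpha> i - \<alpha> 1) * y ^ (\<beta> i - \<beta> 1)))"
  proof (rule sum.cong)
    fix i assume "i \<in> {2..s}"
    then have "\<alpha> i = \<alpha> 1 + (\<alpha> i - \<alpha> 1)" "\<beta> i = \<beta> 1 + (\<beta> i - \<beta> 1)"
      using assms(2) by auto
    then show "a i * x ^ \<alpha> i * y ^ \<beta> i
        = x ^ \<alpha> 1 * y ^ \<beta> 1 * (a i * x ^ (\<alpha> i - \<alpha> 1) * y ^ (\<beta> i - \<beta> 1))"
      by (metis (no_types, lifting) mult.assoc mult.left_commute power_add)
  qed simp
  finally show ?thesis
    by (simp add: sum_distrib_left algebra_simps)
qed

lemma eventually_nonneg_perturbed_iff: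
  fixes g r :: "'a \<Rightarrow> real"
  assumes "c \<noteq> 0" and "(r \<longlongrightarrow> 0) F"
  shows "(\<forall>\<^sub>F z in F. 0 \<le> g z * (c + r z)) \<longleftrightarrow> (\<forall>\<^sub>F z in F. 0 \<le> c * g z)"
proof (rule eventually_subst)
  show "\<forall>\<^sub>F z in F. (0 \<le> g z * (c + r z)) = (0 \<le> c * g z)"
  proof (rule eventually_mono)
    show "\<forall>\<^sub>F z in F. dist (r z) 0 < \<bar>c\<bar>"
      using assms by (intro tendstoD) auto
  next
    fix z assume "dist (r z) 0 < \<bar>c\<bar>"
    then have "0 < c * (c + r z)"
      by (auto simp: dist_real_def zero_less_mult_iff abs_if split: if_splits)
    then show "(0 \<le> g z * (c + r z)) = (0 \<le> c * g z)"
      by (auto simp: zero_le_mult_iff zero_less_mult_iff)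
  qed
qed

lemma eventually_nhds_origin_on_ray:
  fixes u v :: real
  assumes "\<forall>\<^sub>F z in nhds (0, 0). P z"
  shows "\<exists>t>0. P (u * t, v * t)"
proof -
  have "((\<lambda>t. (u * t, v * t)) \<longlongrightarrow> (u * 0, v * 0)) (at_right 0)"
    by (intro tendsto_intros)
  then have "\<forall>\<^sub>F t in at_right 0. P (u * t, v * t)"
    using assms by (simp add: filterlim_iff)
  then have "\<forall>\<^sub>F t in at_right 0. 0 < t \<and> P (u * t, v * t)"
    by (simp add: eventually_conj_iff eventually_at_right_less)
  then show ?thesis
    using eventually_happens trivial_limit_at_right_real by blast
qed

lemma eventually_monomial_nonneg_iff:
  fixes c :: real
  assumes "c \<noteq> 0"
  shows "(\<forall>\<^sub>F z in nhds (0, 0). 0 \<le> c * (fst z ^ m * snd z ^ n))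
    \<longleftrightarrow> 0 < c \<and> even m \<and> even n"
proof
  assume ev: "\<forall>\<^sub>F z in nhds (0, 0). 0 \<le> c * (fst z ^ m * snd z ^ n)"
  obtain t :: real where "t > 0" "0 \<le> c * (t ^ m * t ^ n)"
    using eventually_nhds_origin_on_ray[OF ev, of 1 1] by auto
  moreover from \<open>t > 0\<close> have "0 < t ^ m * t ^ n"
    by simp
  ultimately have "0 < c"
    using assms by (simp add: zero_le_mult_iff)
  obtain t :: real where "t > 0" "0 \<le> c * ((- t) ^ m * t ^ n)"
    using eventually_nhds_origin_on_ray[OF ev, of "-1" 1] by auto
  with \<open>0 < c\<close> have "even m"
    by (simp add: zero_le_mult_iff zero_le_power_eq power_le_zero_eq)
  obtain t :: real where "t > 0" "0 \<le> c * (t ^ m * (- t) ^ n)"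
    using eventually_nhds_origin_on_ray[OF ev, of 1 "-1"] by auto
  with \<open>0 < c\<close> have "even n"
    by (simp add: zero_le_mult_iff zero_le_power_eq power_le_zero_eq)
  show "0 < c \<and> even m \<and> even n"
    using \<open>0 < c\<close> \<open>even m\<close> \<open>even n\<close> by blast
qed (simp add: zero_le_even_power)

theorem mainTheorem4:
  fixes s :: nat and a :: "nat \<Rightarrow> real" and \<alpha> \<beta> :: "nat \<Rightarrow> nat"
    and A1 A2 B :: int
  assumes s_pos: "s \<ge> 1"
    and a_nz: "\<forall>i\<in>{1..s}. a i \<noteq> 0"
    and distinct_exps: "inj_on (\<lambda>i. (\<alpha> i, \<beta> i)) {1..s}"
    and p00: "bipoly s a \<alpha> \<beta> 0 0 = 0"
    and weights: "\<forall>i\<in>{1..s}. A1 * int (\<alpha> i) + A2 * int (\<beta> i) = B"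
    and cases_order:
      "(((A1 > 0 \<and> A2 < 0) \<or> (A1 = 0 \<and> A2 > 0)) \<and> strict_mono_on {1..s} \<alpha>)
       \<or> ((A1 > 0 \<and> A2 = 0) \<and> strict_mono_on {1..s} \<beta>)"
  shows "local_min_at_origin (bipoly s a \<alpha> \<beta>) \<longleftrightarrow> a 1 > 0 \<and> even (\<alpha> 1) \<and> even (\<beta> 1)"
proof -
  have dominate: "\<forall>i\<in>{2..s}. \<alpha> 1 \<le> \<alpha> i \<and> \<beta> 1 \<le> \<beta> i \<and> (\<alpha> 1 < \<alpha> i \<or> \<beta> 1 < \<beta> i)"
    using leading_exponents_dominate[OF weights cases_order] by blast
  define r where "r z = (\<Sum>i=2..s. a i * fst z ^ (\<alpha> i - \<alpha> 1) * snd z ^ (\<beta> i - \<beta> 1))"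
    for z :: "real \<times> real"
  have factor: "bipoly s a \<alpha> \<beta> (fst z) (snd z) = fst z ^ \<alpha> 1 * snd z ^ \<beta> 1 * (a 1 + r z)" for z
    unfolding r_def using s_pos dominate by (intro bipoly_factor_leading) auto
  have "a 1 \<noteq> 0"
    using a_nz s_pos by auto
  moreover have "(r \<longlongrightarrow> 0) (nhds (0, 0))"
    unfolding r_def using dominate by (intro monomial_sum_tendsto_zero) auto
  ultimately have "local_min_at_origin (bipoly s a \<alpha> \<beta>)
      \<longleftrightarrow> (\<forall>\<^sub>F z in nhds (0, 0). 0 \<le> a 1 * (fst z ^ \<alpha> 1 * snd z ^ \<beta> 1))"
    unfolding local_min_at_origin_def p00 factor by (rule eventually_nonneg_perturbed_iff)
  also have "\<dots> \<longleftrightarrow> a 1 > 0 \<and> even (\<alpha> 1) \<and> even (\<beta> 1)"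
    using \<open>a 1 \<noteq> 0\<close> by (rule eventually_monomial_nonneg_iff)
  finally show ?thesis .
qed

end
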